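(* Consider the waning-immunity model described in the context, with $\beta_0>0$. Let $C>0$ be a constant as follows: for all sufficiently small $\delta\ge0$, every endemic equilibrium with $I^*\in[0,1]$ has $I^*\in J_1\cup J_2$, where $J_i=[y_i-C\sqrt\delta,\,y_i+C\sqrt\delta]$ and $y_1\le y_2$ are the real roots of $$1+\frac{r}{\beta_0x+\mu}-\frac{\beta_n}{\beta_nx+\mu+\omega_n}-\frac{\omega_n\beta_0}{(\beta_0x+\mu)(\beta_nx+\mu+\omega_n)}=0.$$ Suppose $J_i\subset(0,1]$ for some $i\in\{1,2\}$. Then for $\delta$ sufficiently small, provided $|y_1-y_2|\ge\delta^{1/3}$, there exists a unique endemic equilibrium of the system with $I^*\in J_i$.
   Context: Model: Fix an integer $n\ge 1$ and parameters $\delta\ge 0$ (rate of waning immunity), $\omega\ge 0$ (vaccination rate), $r>0$ (recovery rate), $\mu>0$ (birth = death rate), coverages $p_0=0$, $p_1,\dots,p_n\in[0,1]$, and transmission rates $0\le\beta_0\le\beta_1\le\dots\le\beta_n$ with $\beta_0<\beta_n$. Write $\omega_i=p_i\omega$, $\delta_i=(1-p_i)\delta$ (so $\delta_0=\delta$). The ODE system for $(S_0,\dots,S_n,I)$ is $$S_0'=\sum_{i=1}^n\omega_iS_i-\delta S_0+rI-\beta_0IS_0-\mu S_0,$$ $$S_i'=-\omega_iS_i+\delta_{i-1}S_{i-1}-\delta_iS_i-\beta_iIS_i-\mu S_i\quad(1\le i\le n-1),$$ $$S_n'=\mu-\omega_nS_n+\delta_{n-1}S_{n-1}-\beta_nIS_n-\mu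 S_n,$$ $$I'=I\sum_{i=0}^n\beta_iS_i-rI-\mu I,$$ with the normalization $\sum_iS_i+I=1$. An endemic equilibrium is an equilibrium $(S_0^*,\dots,S_n^*,I^* )$ of this system satisfying the normalization with $I^*\neq0$. *)

theory Defs
  imports Complex_Main
begin

text \<open>Compartments S_0..S_n are
  given by a function S :: nat => real (only indices 0..n matter).
  omega_i = p i * omega, delta_i = (1 - p i) * delta, with p 0 = 0 assumed separately.\<close>

definition endemic_equilibrium ::
  "nat \<Rightarrow> real \<Rightarrow> real \<Rightarrow> real \<Rightarrow> real \<Rightarrow> (nat \<Rightarrow> real) \<Rightarrow> (nat \<Rightarrow> real)
   \<Rightarrow> (nat \<Rightarrow> real) \<Rightarrow> real \<Rightarrow> bool" where
  "endemic_equilibrium n \<delta> \<omega> r \<mu> p \<beta> S I \<longleftrightarrow>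
     (\<Sum>i\<le>n. S i) + I = 1 \<and> I \<noteq> 0 \<and>
     (\<Sum>i\<in>{1..n}. p i * \<omega> * S i) - \<delta> * S 0 + r * I - \<beta> 0 * I * S 0 - \<mu> * S 0 = 0 \<and>
     (\<forall>i\<in>{1..n-1}. - (p i * \<omega>) * S i + (1 - p (i-1)) * \<delta> * S (i-1)
          - (1 - p i) * \<delta> * S i - \<beta> i * I * S i - \<mu> * S i = 0) \<and>
     \<mu> - p n * \<omega> * S n + (1 - p (n-1)) * \<delta> * S (n-1) - \<beta> n * I * S n - \<mu> * S n = 0 \<and>
     I * (\<Sum>i\<le>n. \<beta> i * S i) - r * I - \<mu> * I = 0"

definition root_fun :: "real \<Rightarrow> real \<Rightarrow> real \<Rightarrow> real \<Rightarrow> real \<Rightarrow> real \<Rightarrow> real" where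
  "root_fun r \<mu> \<beta>0 \<beta>n \<omega>n x =
     1 + r / (\<beta>0 * x + \<mu>) - \<beta>n / (\<beta>n * x + \<mu> + \<omega>n)
       - \<omega>n * \<beta>0 / ((\<beta>0 * x + \<mu>) * (\<beta>n * x + \<mu> + \<omega>n))"

end

theory Submission
  imports Defs
begin

(* An endemic equilibrium with infection level x > 0 is determined by S_0: the equations for
   S_1, ..., S_(n-1) give S_i = ratio i x \<delta> * S_0, the one for S_n gives S_n, and substituting into
   the normalisation and the I-equation yields two linear equations for S_0 whose compatibility
   condition is reduced x \<delta> = 0; the S_0-equation then holds automatically.  At \<delta> = 0 all ratios
   but the first vanish and reduced x 0 is a positive multiple of the quadratic endemic_poly, whose
   roots are y1 and y2.  For y1 \<noteq> y2 the root y is simple, so the x-derivative of reduced is bounded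
   away from 0 near (y, 0), while reduced y \<delta> = O(\<delta>).  Hence for small \<delta> the function reduced(-, \<delta>)
   is strictly monotone on [y - C sqrt \<delta>, y + C sqrt \<delta>] and changes sign there, so it has exactly one
   zero in that interval. *)

lemma unique_zero_of_steep_function:
  fixes f f' :: "real \<Rightarrow> real"
  assumes "0 < g"
    and deriv: "\<And>x. \<bar>x - y\<bar> \<le> h \<Longrightarrow> (f has_real_derivative f' x) (at x)"
    and steep: "\<And>x. \<bar>x - y\<bar> \<le> h \<Longrightarrow> g \<le> f' x"
    and small: "\<bar>f y\<bar> < g * h"
  shows "\<exists>!x. \<bar>x - y\<bar> \<le> h \<and> f x = 0"
proof -
  have "0 < g * h"
    using small by (smt (verit) abs_ge_zero)
  then have "h > 0"
    using \<open>0 < g\<close> by (simp add: zero_less_mult_iff)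
  have between: "\<bar>x - y\<bar> \<le> h" if "a \<le> x" "x \<le> b" "\<bar>a - y\<bar> \<le> h" "\<bar>b - y\<bar> \<le> h" for a b x
    using that by (simp add: abs_le_iff)
  have increasing: "f a < f b" if "a < b" "\<bar>a - y\<bar> \<le> h" "\<bar>b - y\<bar> \<le> h" for a b
  proof (rule DERIV_pos_imp_increasing[OF \<open>a < b\<close>])
    fix x assume "a \<le> x" "x \<le> b"
    then have "\<bar>x - y\<bar> \<le> h" using between that by blast
    then show "\<exists>z. (f has_real_derivative z) (at x) \<and> z > 0"
      using deriv steep \<open>0 < g\<close> by (meson less_le_trans)
  qed
  have slope: "f a + g * (b - a) \<le> f b" if "a \<le> b" "\<bar>a - y\<bar> \<le> h" "\<bar>b - y\<bar> \<le> h" for a b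
  proof -
    have "(\<lambda>x. f x - g * x) a \<le> (\<lambda>x. f x - g * x) b"
    proof (rule DERIV_nonneg_imp_nondecreasing[OF \<open>a \<le> b\<close>])
      fix x assume "a \<le> x" "x \<le> b"
      then have "\<bar>x - y\<bar> \<le> h" using between that by blast
      then show "\<exists>z. ((\<lambda>x. f x - g * x) has_real_derivative z) (at x) \<and> z \<ge> 0"
        using deriv steep by (intro exI[of _ "f' x - g"]) (auto intro!: derivative_eq_intros)
    qed
    then show ?thesis by (simp add: algebra_simps)
  qed
  have "f (y - h) < 0" "0 < f (y + h)"
    using slope[of "y - h" y] slope[of y "y + h"] small \<open>h > 0\<close> by auto
  moreover have "continuous_on {y - h..y + h} f"
    by (rule DERIV_atLeastAtMost_imp_continuous_on) (use deriv in \<open>force simp: abs_le_iff\<close>)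
  ultimately obtain x where "y - h \<le> x" "x \<le> y + h" "f x = 0"
    using IVT'[of f "y - h" 0 "y + h"] \<open>h > 0\<close> by auto
  then have "\<bar>x - y\<bar> \<le> h"
    by (simp add: abs_le_iff)
  then show ?thesis
    using \<open>f x = 0\<close> increasing by (metis linorder_neqE_linordered_idom less_irrefl)
qed

lemma tendsto_div_sqrt_at_right_0:
  fixes f :: "real \<Rightarrow> real"
  assumes "f differentiable (at 0)" and "f 0 = 0"
  shows "((\<lambda>d. f d / sqrt d) \<longlongrightarrow> 0) (at_right 0)"
proof -
  obtain D where "(f has_real_derivative D) (at 0)"
    using assms(1) real_differentiable_def by blast
  then have "((\<lambda>d. (f d - f 0) / (d - 0)) \<longlongrightarrow> D) (at_right 0)"
    unfolding has_field_derivative_iff by (rule tendsto_mono[OF at_le, rotated]) simp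
  then have "((\<lambda>d. f d / d * sqrt d) \<longlongrightarrow> D * sqrt 0) (at_right 0)"
    using assms(2) by (intro tendsto_intros) simp_all
  moreover have "\<forall>\<^sub>F d in at_right 0. f d / d * sqrt d = f d / sqrt d"
    using eventually_at_right_less[of 0]
  proof eventually_elim
    case (elim d)
    then show ?case
      by (simp add: field_simps mult.assoc)
  qed
  ultimately show ?thesis
    by (auto intro: Lim_transform_eventually)
qed

lemma eventually_unique_zero_near_simple_zero_pos:
  fixes F G :: "real \<Rightarrow> real \<Rightarrow> real"
  assumes deriv: "\<forall>\<^sub>F (x, d) in nhds y \<times>\<^sub>F at_right 0. ((\<lambda>x. F x d) has_real_derivative G x d) (at x)"
    and cont: "isCont (\<lambda>z. G (fst z) (snd z)) (y, 0)"
    and pos: "G y 0 > 0"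
    and small: "((\<lambda>d. F y d / sqrt d) \<longlongrightarrow> 0) (at_right 0)"
    and "C > 0"
  shows "\<forall>\<^sub>F d in at_right 0. \<exists>!x. \<bar>x - y\<bar> \<le> C * sqrt d \<and> F x d = 0"
proof -
  define g where "g = G y 0 / 2"
  have "g > 0" using pos by (simp add: g_def)
  have "((\<lambda>z. G (fst z) (snd z)) \<longlongrightarrow> G y 0) (nhds (y, 0))"
    using cont tendsto_at_iff_tendsto_nhds[of "\<lambda>z. G (fst z) (snd z)" "(y, 0)"]
    by (simp add: isCont_def)
  then have "\<forall>\<^sub>F z in nhds (y, 0). g < G (fst z) (snd z)"
    by (rule order_tendstoD(1)) (use pos in \<open>simp add: g_def\<close>)
  moreover have "nhds y \<times>\<^sub>F at_right 0 \<le> nhds (y, 0)"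
    unfolding nhds_prod by (intro prod_filter_mono) (simp_all add: at_within_def)
  ultimately have "\<forall>\<^sub>F (x, d) in nhds y \<times>\<^sub>F at_right 0. g < G x d"
    unfolding case_prod_beta' by (rule filter_leD[rotated])
  with deriv have "\<forall>\<^sub>F (x, d) in nhds y \<times>\<^sub>F at_right 0.
      ((\<lambda>x. F x d) has_real_derivative G x d) (at x) \<and> g < G x d"
    unfolding case_prod_beta' by (rule eventually_conj)
  then obtain P Q where "eventually P (nhds y)" "eventually Q (at_right 0)"
    and PQ: "\<And>x d. P x \<Longrightarrow> Q d \<Longrightarrow> ((\<lambda>x. F x d) has_real_derivative G x d) (at x) \<and> g < G x d"
    unfolding eventually_prod_filter by auto
  then obtain \<rho> where "\<rho> > 0" and \<rho>: "\<And>x. \<bar>x - y\<bar> < \<rho> \<Longrightarrow> P x"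
    unfolding eventually_nhds_metric dist_real_def by auto
  have "((\<lambda>d. C * sqrt d) \<longlongrightarrow> C * sqrt 0) (at_right 0)"
    by (intro tendsto_intros)
  then have "\<forall>\<^sub>F d in at_right 0. C * sqrt d < \<rho>"
    using \<open>\<rho> > 0\<close> by (intro order_tendstoD(2)) auto
  moreover have "\<forall>\<^sub>F d in at_right 0. \<bar>F y d / sqrt d\<bar> < g * C"
    using tendsto_rabs[OF small] \<open>g > 0\<close> \<open>C > 0\<close> by (intro order_tendstoD(2)) auto
  ultimately show ?thesis
    using \<open>eventually Q (at_right 0)\<close> eventually_at_right_less[of 0]
  proof eventually_elim
    case (elim d)
    show ?case
    proof (rule unique_zero_of_steep_function[OF \<open>g > 0\<close>])
      fix x assume "\<bar>x - y\<bar> \<le> C * sqrt d"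
      then have "P x" using elim by (intro \<rho>) auto
      then show "((\<lambda>x. F x d) has_real_derivative G x d) (at x)" "g \<le> G x d"
        using PQ elim less_imp_le by blast+
    next
      show "\<bar>F y d\<bar> < g * (C * sqrt d)"
        using elim by (simp add: abs_div pos_divide_less_eq mult.assoc)
    qed
  qed
qed

lemma eventually_unique_zero_near_simple_zero:
  fixes F G :: "real \<Rightarrow> real \<Rightarrow> real"
  assumes deriv: "\<forall>\<^sub>F (x, d) in nhds y \<times>\<^sub>F at_right 0. ((\<lambda>x. F x d) has_real_derivative G x d) (at x)"
    and cont: "isCont (\<lambda>z. G (fst z) (snd z)) (y, 0)"
    and nonzero: "G y 0 \<noteq> 0"
    and small: "((\<lambda>d. F y d / sqrt d) \<longlongrightarrow> 0) (at_right 0)"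
    and "C > 0"
  shows "\<forall>\<^sub>F d in at_right 0. \<exists>!x. \<bar>x - y\<bar> \<le> C * sqrt d \<and> F x d = 0"
proof (cases "G y 0 > 0")
  case True
  then show ?thesis
    using eventually_unique_zero_near_simple_zero_pos assms by blast
next
  case False
  have "\<forall>\<^sub>F d in at_right 0. \<exists>!x. \<bar>x - y\<bar> \<le> C * sqrt d \<and> - F x d = 0"
  proof (rule eventually_unique_zero_near_simple_zero_pos[where G = "\<lambda>x d. - G x d"])
    show "\<forall>\<^sub>F (x, d) in nhds y \<times>\<^sub>F at_right 0. ((\<lambda>x. - F x d) has_real_derivative - G x d) (at x)"
      using deriv by (auto elim!: eventually_mono intro: derivative_intros)
    show "((\<lambda>d. - F y d / sqrt d) \<longlongrightarrow> 0) (at_right 0)"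
      using tendsto_minus[OF small] by simp
  qed (use cont nonzero False \<open>C > 0\<close> in \<open>auto intro: continuous_intros\<close>)
  then show ?thesis by simp
qed

lemma Ball_atLeastAtMost_Suc_conv: "(\<forall>i\<in>{1..n - 1}. Q i) \<longleftrightarrow> (\<forall>j. Suc j < n \<longrightarrow> Q (Suc j))"
proof
  assume Q: "\<forall>j. Suc j < n \<longrightarrow> Q (Suc j)"
  show "\<forall>i\<in>{1..n - 1}. Q i"
  proof
    fix i assume "i \<in> {1..n - 1}"
    then obtain j where "i = Suc j" "Suc j < n"
      by (cases i) auto
    then show "Q i" using Q by simp
  qed
qed auto

locale waning_immunity =
  fixes n :: nat and \<omega> r \<mu> :: real and p \<beta> :: "nat \<Rightarrow> real"
  assumes n_ge_1: "n \<ge> 1" and \<omega>_nonneg: "\<omega> \<ge> 0" and \<mu>_pos: "\<mu> > 0"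
    and p_0: "p 0 = 0" and p_bounds: "\<forall>i\<in>{1..n}. 0 \<le> p i \<and> p i \<le> 1"
    and \<beta>_0_pos: "\<beta> 0 > 0" and \<beta>_mono: "\<forall>i j. i \<le> j \<and> j \<le> n \<longrightarrow> \<beta> i \<le> \<beta> j"
begin

definition outflow_rate :: "nat \<Rightarrow> real \<Rightarrow> real \<Rightarrow> real" where
  "outflow_rate k x d = p k * \<omega> + (1 - p k) * d + \<beta> k * x + \<mu>"

definition outflow_rate_last :: "real \<Rightarrow> real" where
  "outflow_rate_last x = p n * \<omega> + \<beta> n * x + \<mu>"

primrec ratio :: "nat \<Rightarrow> real \<Rightarrow> real \<Rightarrow> real" where
  "ratio 0 x d = 1"
| "ratio (Suc i) x d = ratio i x d * ((1 - p i) * d / outflow_rate (Suc i) x d)"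

primrec ratio_dx :: "nat \<Rightarrow> real \<Rightarrow> real \<Rightarrow> real" where
  "ratio_dx 0 x d = 0"
| "ratio_dx (Suc i) x d = ratio_dx i x d * ((1 - p i) * d / outflow_rate (Suc i) x d)
     - ratio i x d * (1 - p i) * d * \<beta> (Suc i) / (outflow_rate (Suc i) x d)\<^sup>2"

definition pop_coeff :: "real \<Rightarrow> real \<Rightarrow> real" where
  "pop_coeff x d = outflow_rate_last x * (\<Sum>i<n. ratio i x d) + (1 - p (n - 1)) * d * ratio (n - 1) x d"

definition inf_coeff :: "real \<Rightarrow> real \<Rightarrow> real" where
  "inf_coeff x d = outflow_rate_last x * (\<Sum>i<n. \<beta> i * ratio i x d)
     + \<beta> n * (1 - p (n - 1)) * d * ratio (n - 1) x d"

definition reduced :: "real \<Rightarrow> real \<Rightarrow> real" where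
  "reduced x d = inf_coeff x d * (outflow_rate_last x * (1 - x) - \<mu>)
     + (\<beta> n * \<mu> - (r + \<mu>) * outflow_rate_last x) * pop_coeff x d"

definition pop_coeff_dx :: "real \<Rightarrow> real \<Rightarrow> real" where
  "pop_coeff_dx x d = \<beta> n * (\<Sum>i<n. ratio i x d) + outflow_rate_last x * (\<Sum>i<n. ratio_dx i x d)
     + (1 - p (n - 1)) * d * ratio_dx (n - 1) x d"

definition inf_coeff_dx :: "real \<Rightarrow> real \<Rightarrow> real" where
  "inf_coeff_dx x d = \<beta> n * (\<Sum>i<n. \<beta> i * ratio i x d)
     + outflow_rate_last x * (\<Sum>i<n. \<beta> i * ratio_dx i x d)
     + \<beta> n * (1 - p (n - 1)) * d * ratio_dx (n - 1) x d"

definition reduced_dx :: "real \<Rightarrow> real \<Rightarrow> real" where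
  "reduced_dx x d = inf_coeff_dx x d * (outflow_rate_last x * (1 - x) - \<mu>)
     + inf_coeff x d * (\<beta> n * (1 - x) - outflow_rate_last x)
     - (r + \<mu>) * \<beta> n * pop_coeff x d + (\<beta> n * \<mu> - (r + \<mu>) * outflow_rate_last x) * pop_coeff_dx x d"

definition susceptible_0 :: "real \<Rightarrow> real \<Rightarrow> real" where
  "susceptible_0 x d = (outflow_rate_last x * (1 - x) - \<mu>) / pop_coeff x d"

definition equilibrium_S :: "real \<Rightarrow> real \<Rightarrow> nat \<Rightarrow> real" where
  "equilibrium_S x d i = (if i < n then ratio i x d * susceptible_0 x d
     else (\<mu> + (1 - p (n - 1)) * d * ratio (n - 1) x d * susceptible_0 x d) / outflow_rate_last x)"

definition endemic_poly :: "real \<Rightarrow> real" where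
  "endemic_poly x = \<beta> 0 * (outflow_rate_last x * (1 - x) - \<mu>) + \<beta> n * \<mu> - (r + \<mu>) * outflow_rate_last x"

definition endemic_poly_dx :: "real \<Rightarrow> real" where
  "endemic_poly_dx x = \<beta> 0 * (\<beta> n * (1 - x) - outflow_rate_last x) - (r + \<mu>) * \<beta> n"

lemma p_range: "i \<le> n \<Longrightarrow> 0 \<le> p i \<and> p i \<le> 1"
  using p_bounds p_0 by (cases "i = 0") auto

lemma \<beta>_pos: "i \<le> n \<Longrightarrow> \<beta> i > 0"
  using \<beta>_mono \<beta>_0_pos by (metis le0 less_le_trans)

lemma outflow_rate_pos:
  assumes "k \<le> n" "0 \<le> x" "0 \<le> d"
  shows "outflow_rate k x d > 0"
proof -
  have "0 \<le> p k * \<omega>" "0 \<le> (1 - p k) * d" "0 \<le> \<beta> k * x"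
    using p_range[of k] \<beta>_pos[of k] \<omega>_nonneg assms by simp_all
  then show ?thesis
    using \<mu>_pos by (simp add: outflow_rate_def)
qed

lemma outflow_rate_last_pos:
  assumes "0 \<le> x"
  shows "outflow_rate_last x > 0"
proof -
  have "0 \<le> p n * \<omega>" "0 \<le> \<beta> n * x"
    using p_range[of n] \<beta>_pos[of n] \<omega>_nonneg assms by simp_all
  then show ?thesis
    using \<mu>_pos by (simp add: outflow_rate_last_def)
qed

lemma ratio_nonneg: "i < n \<Longrightarrow> 0 \<le> x \<Longrightarrow> 0 \<le> d \<Longrightarrow> ratio i x d \<ge> 0"
proof (induction i)
  case (Suc i)
  then show ?case
    using outflow_rate_pos[of "Suc i" x d] p_range[of i] by simp
qed simp

lemma pop_coeff_pos:
  assumes "0 \<le> x" "0 \<le> d"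
  shows "pop_coeff x d > 0"
proof -
  have "1 = ratio 0 x d" by simp
  also have "\<dots> \<le> (\<Sum>i<n. ratio i x d)"
    using n_ge_1 assms by (intro member_le_sum) (auto intro: ratio_nonneg)
  finally have "outflow_rate_last x * (\<Sum>i<n. ratio i x d) > 0"
    using outflow_rate_last_pos[OF assms(1)] by simp
  moreover have "(1 - p (n - 1)) * d * ratio (n - 1) x d \<ge> 0"
    using p_range[of "n - 1"] ratio_nonneg[of "n - 1" x d] assms n_ge_1 by simp
  ultimately show ?thesis
    by (simp add: pop_coeff_def)
qed

lemma has_real_derivative_ratio:
  "i < n \<Longrightarrow> 0 \<le> x \<Longrightarrow> 0 \<le> d \<Longrightarrow> ((\<lambda>x. ratio i x d) has_real_derivative ratio_dx i x d) (at x)"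
proof (induction i)
  case (Suc i)
  have "outflow_rate (Suc i) x d \<noteq> 0"
    using outflow_rate_pos[of "Suc i" x d] Suc.prems by simp
  moreover have "((\<lambda>x. outflow_rate (Suc i) x d) has_real_derivative \<beta> (Suc i)) (at x)"
    unfolding outflow_rate_def by (auto intro!: derivative_eq_intros)
  ultimately show ?case
    using Suc by (auto intro!: derivative_eq_intros simp: power2_eq_square field_simps)
qed simp

lemma has_real_derivative_reduced:
  assumes "0 \<le> x" "0 \<le> d"
  shows "((\<lambda>x. reduced x d) has_real_derivative reduced_dx x d) (at x)"
proof -
  have ratio: "((\<lambda>x. ratio i x d) has_real_derivative ratio_dx i x d) (at x)" if "i < n" for i
    using has_real_derivative_ratio that assms by blast
  have "((\<lambda>x. ratio (n - 1) x d) has_real_derivative ratio_dx (n - 1) x d) (at x)"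
    using ratio n_ge_1 by simp
  moreover have last: "(outflow_rate_last has_real_derivative \<beta> n) (at x)"
    unfolding outflow_rate_last_def by (auto intro!: derivative_eq_intros)
  ultimately have "((\<lambda>x. pop_coeff x d) has_real_derivative pop_coeff_dx x d) (at x)"
    and "((\<lambda>x. inf_coeff x d) has_real_derivative inf_coeff_dx x d) (at x)"
    unfolding pop_coeff_def pop_coeff_dx_def inf_coeff_def inf_coeff_dx_def
    by (auto intro!: derivative_eq_intros ratio simp: algebra_simps sum_distrib_left sum.distrib)
  then show ?thesis
    unfolding reduced_def reduced_dx_def
    by (auto intro!: derivative_eq_intros last simp: algebra_simps)
qed

lemma isCont_ratio:
  "i < n \<Longrightarrow> 0 \<le> x \<Longrightarrow> 0 \<le> d \<Longrightarrow> isCont (\<lambda>z. ratio i (fst z) (snd z)) (x, d)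
     \<and> isCont (\<lambda>z. ratio_dx i (fst z) (snd z)) (x, d)"
proof (induction i)
  case (Suc i)
  have "outflow_rate (Suc i) x d \<noteq> 0"
    using outflow_rate_pos[of "Suc i" x d] Suc.prems by simp
  then show ?case
    using Suc unfolding ratio.simps ratio_dx.simps outflow_rate_def
    by (auto intro!: continuous_intros)
qed simp

lemma isCont_reduced_dx:
  assumes "0 \<le> x"
  shows "isCont (\<lambda>z. reduced_dx (fst z) (snd z)) (x, 0)"
proof -
  have "isCont (\<lambda>z. ratio i (fst z) (snd z)) (x, 0)" "isCont (\<lambda>z. ratio_dx i (fst z) (snd z)) (x, 0)"
    if "i < n" for i
    using isCont_ratio that assms by auto
  then show ?thesis
    unfolding reduced_dx_def pop_coeff_def pop_coeff_dx_def inf_coeff_def inf_coeff_dx_def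
      outflow_rate_last_def
    using n_ge_1 by (intro continuous_intros) auto
qed

lemma ratio_Suc_at_0: "ratio (Suc i) x 0 = 0"
  and ratio_dx_at_0: "ratio_dx i x 0 = 0"
  by (induction i) auto

lemma sum_ratio_at_0: "(\<Sum>i<n. f i * ratio i x 0) = f 0"
proof -
  obtain m where m: "n = Suc m"
    using n_ge_1 by (cases n) auto
  show ?thesis
    unfolding m sum.lessThan_Suc_shift by (simp add: ratio_Suc_at_0)
qed

lemma reduced_at_0: "reduced x 0 = outflow_rate_last x * endemic_poly x"
  using sum_ratio_at_0[of \<beta> x] sum_ratio_at_0[of "\<lambda>_. 1" x]
  by (simp add: reduced_def inf_coeff_def pop_coeff_def endemic_poly_def algebra_simps)

lemma reduced_dx_at_0:
  "reduced_dx x 0 = \<beta> n * endemic_poly x + outflow_rate_last x * endemic_poly_dx x"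
  using sum_ratio_at_0[of \<beta> x] sum_ratio_at_0[of "\<lambda>_. 1" x]
  by (simp add: reduced_dx_def inf_coeff_def pop_coeff_def inf_coeff_dx_def pop_coeff_dx_def
      ratio_dx_at_0 endemic_poly_def endemic_poly_dx_def outflow_rate_last_def algebra_simps)

lemma differentiable_reduced_at_0:
  assumes "0 \<le> x"
  shows "(\<lambda>d. reduced x d) differentiable (at 0)"
proof -
  have "(\<lambda>d. ratio i x d) differentiable (at 0)" if "i < n" for i
    using that
  proof (induction i)
    case 0
    have "ratio 0 x = (\<lambda>d. 1)"
      by (rule ext) simp
    then show ?case
      by simp
  next
    case (Suc i)
    have "outflow_rate (Suc i) x 0 \<noteq> 0"
      using outflow_rate_pos[of "Suc i" x 0] Suc.prems assms by simp
    then show ?case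
      using Suc unfolding ratio.simps outflow_rate_def by (auto intro!: derivative_intros)
  qed
  then show ?thesis
    unfolding reduced_def inf_coeff_def pop_coeff_def
    using n_ge_1 by (intro derivative_intros) auto
qed

lemma middle_equations_iff_ratio:
  assumes "0 \<le> x" "0 \<le> d"
  shows "(\<forall>i\<in>{1..n - 1}. - (p i * \<omega>) * S i + (1 - p (i - 1)) * d * S (i - 1)
            - (1 - p i) * d * S i - \<beta> i * x * S i - \<mu> * S i = 0)
    \<longleftrightarrow> (\<forall>i<n. S i = ratio i x d * S 0)"
proof -
  have step: "(- (p (Suc j) * \<omega>) * S (Suc j) + (1 - p j) * d * S j
      - (1 - p (Suc j)) * d * S (Suc j) - \<beta> (Suc j) * x * S (Suc j) - \<mu> * S (Suc j) = 0)
    \<longleftrightarrow> S (Suc j) = S j * ((1 - p j) * d / outflow_rate (Suc j) x d)" if "Suc j < n" for j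
    using outflow_rate_pos[of "Suc j" x d] that assms
    by (auto simp: outflow_rate_def field_simps)
  have "(\<forall>i\<in>{1..n - 1}. - (p i * \<omega>) * S i + (1 - p (i - 1)) * d * S (i - 1)
            - (1 - p i) * d * S i - \<beta> i * x * S i - \<mu> * S i = 0)
    \<longleftrightarrow> (\<forall>j. Suc j < n \<longrightarrow> S (Suc j) = S j * ((1 - p j) * d / outflow_rate (Suc j) x d))"
    unfolding Ball_atLeastAtMost_Suc_conv using step by simp
  also have "\<dots> \<longleftrightarrow> (\<forall>i<n. S i = ratio i x d * S 0)"
  proof
    assume rec: "\<forall>j. Suc j < n \<longrightarrow> S (Suc j) = S j * ((1 - p j) * d / outflow_rate (Suc j) x d)"
    show "\<forall>i<n. S i = ratio i x d * S 0"
    proof (intro allI impI)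
      fix i assume "i < n"
      then show "S i = ratio i x d * S 0"
        by (induction i) (simp_all add: rec)
    qed
  next
    assume chain: "\<forall>i<n. S i = ratio i x d * S 0"
    show "\<forall>j. Suc j < n \<longrightarrow> S (Suc j) = S j * ((1 - p j) * d / outflow_rate (Suc j) x d)"
    proof (intro allI impI)
      fix j assume "Suc j < n"
      then show "S (Suc j) = S j * ((1 - p j) * d / outflow_rate (Suc j) x d)"
        using chain[rule_format, of j] chain[rule_format, of "Suc j"] by simp
    qed
  qed
  finally show ?thesis .
qed

lemma sums_of_ratio_chain:
  assumes chain: "\<forall>i<n. S i = ratio i x d * S 0"
    and last: "S n * outflow_rate_last x = \<mu> + (1 - p (n - 1)) * d * S (n - 1)"
  shows "outflow_rate_last x * (\<Sum>i\<le>n. S i) = S 0 * pop_coeff x d + \<mu>"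
    and "outflow_rate_last x * (\<Sum>i\<le>n. \<beta> i * S i) = S 0 * inf_coeff x d + \<beta> n * \<mu>"
proof -
  have last_but_one: "S (n - 1) = ratio (n - 1) x d * S 0"
    using chain[rule_format, of "n - 1"] n_ge_1 by simp
  have weighted_sum: "(\<Sum>i<n. f i * S i) = S 0 * (\<Sum>i<n. f i * ratio i x d)" for f
  proof -
    have "(\<Sum>i<n. f i * S i) = (\<Sum>i<n. S 0 * (f i * ratio i x d))"
    proof (rule sum.cong[OF refl])
      fix i assume "i \<in> {..<n}"
      then show "f i * S i = S 0 * (f i * ratio i x d)"
        using chain[rule_format, of i] by simp
    qed
    then show ?thesis
      by (simp add: sum_distrib_left)
  qed
  have "outflow_rate_last x * (\<Sum>i\<le>n. f i * S i)
      = outflow_rate_last x * (\<Sum>i<n. f i * S i) + f n * (S n * outflow_rate_last x)" for f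
    by (simp add: lessThan_Suc_atMost[symmetric] algebra_simps)
  from this[of "\<lambda>_. 1"] this[of \<beta>]
  show "outflow_rate_last x * (\<Sum>i\<le>n. S i) = S 0 * pop_coeff x d + \<mu>"
    and "outflow_rate_last x * (\<Sum>i\<le>n. \<beta> i * S i) = S 0 * inf_coeff x d + \<beta> n * \<mu>"
    unfolding weighted_sum last last_but_one by (simp_all add: pop_coeff_def inf_coeff_def algebra_simps)
qed

lemma first_equation_redundant:
  assumes norm: "(\<Sum>i\<le>n. S i) + I = 1"
    and middle: "\<forall>i\<in>{1..n - 1}. - (p i * \<omega>) * S i + (1 - p (i - 1)) * d * S (i - 1)
          - (1 - p i) * d * S i - \<beta> i * I * S i - \<mu> * S i = 0"
    and last: "\<mu> - p n * \<omega> * S n + (1 - p (n - 1)) * d * S (n - 1) - \<beta> n * I * S n - \<mu> * S n = 0"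
    and infected: "(\<Sum>i\<le>n. \<beta> i * S i) = r + \<mu>"
  shows "(\<Sum>i\<in>{1..n}. p i * \<omega> * S i) - d * S 0 + r * I - \<beta> 0 * I * S 0 - \<mu> * S 0 = 0"
proof -
  define T where "T i = (1 - p i) * d * S i" for i
  have split_0: "(\<Sum>i\<le>n. f i) = f 0 + (\<Sum>i\<in>{1..n}. f i)" for f :: "nat \<Rightarrow> real"
    by (simp add: atMost_atLeast0 sum.atLeast_Suc_atMost)
  have vacc: "p i * \<omega> * S i = T (i - 1) - T i - \<beta> i * I * S i - \<mu> * S i + (if i = n then T n + \<mu> else 0)"
    if "i \<in> {1..n}" for i
    using that middle last by (cases "i = n") (auto simp: T_def algebra_simps)
  have "(\<Sum>i\<in>{1..n}. p i * \<omega> * S i) = (\<Sum>i\<in>{1..n}.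
      T (i - 1) - T i - \<beta> i * I * S i - \<mu> * S i + (if i = n then T n + \<mu> else 0))"
    by (rule sum.cong) (simp_all add: vacc)
  also have "\<dots> = (\<Sum>i\<in>{1..n}. T (i - 1) - T i) - I * (\<Sum>i\<in>{1..n}. \<beta> i * S i)
      - \<mu> * (\<Sum>i\<in>{1..n}. S i) + (T n + \<mu>)"
    using n_ge_1 by (simp add: sum.distrib sum_subtractf sum_distrib_left algebra_simps)
  also have "(\<Sum>i\<in>{1..n}. T (i - 1) - T i) = T 0 - T n"
    using sum_telescope''[of 0 n T] by (simp add: sum_negf[symmetric] sum_subtractf)
  finally have vaccinated: "(\<Sum>i\<in>{1..n}. p i * \<omega> * S i)
      = T 0 - I * (\<Sum>i\<in>{1..n}. \<beta> i * S i) - \<mu> * (\<Sum>i\<in>{1..n}. S i) + \<mu>"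
    by simp
  have susceptible: "(\<Sum>i\<in>{1..n}. S i) = 1 - I - S 0"
    using norm split_0[of S] by simp
  have force: "(\<Sum>i\<in>{1..n}. \<beta> i * S i) = r + \<mu> - \<beta> 0 * S 0"
    using infected split_0[of "\<lambda>i. \<beta> i * S i"] by simp
  show ?thesis
    unfolding vaccinated susceptible force using p_0 by (simp add: T_def algebra_simps)
qed

lemma last_equation_iff:
  "\<mu> - p n * \<omega> * S n + (1 - p (n - 1)) * d * S (n - 1) - \<beta> n * x * S n - \<mu> * S n = 0
    \<longleftrightarrow> S n * outflow_rate_last x = \<mu> + (1 - p (n - 1)) * d * S (n - 1)"
  by (auto simp: outflow_rate_last_def algebra_simps)

lemma endemic_equilibrium_imp_reduced_eq_0:
  assumes eq: "endemic_equilibrium n d \<omega> r \<mu> p \<beta> S x" and "0 \<le> x" "0 \<le> d"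
  shows "reduced x d = 0" and "\<forall>i\<le>n. S i = equilibrium_S x d i"
proof -
  note eqs = eq[unfolded endemic_equilibrium_def]
  have chain: "\<forall>i<n. S i = ratio i x d * S 0"
    using eqs middle_equations_iff_ratio[OF \<open>0 \<le> x\<close> \<open>0 \<le> d\<close>] by blast
  have last: "S n * outflow_rate_last x = \<mu> + (1 - p (n - 1)) * d * S (n - 1)"
    using eqs last_equation_iff by blast
  have "x * ((\<Sum>i\<le>n. \<beta> i * S i) - (r + \<mu>)) = 0"
    using eqs by (simp add: algebra_simps)
  then have "(\<Sum>i\<le>n. \<beta> i * S i) = r + \<mu>"
    using eqs by simp
  then have inf: "S 0 * inf_coeff x d = (r + \<mu>) * outflow_rate_last x - \<beta> n * \<mu>"
    using sums_of_ratio_chain(2)[OF chain last] by (simp add: algebra_simps)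
  have "(\<Sum>i\<le>n. S i) = 1 - x"
    using eqs by simp
  then have pop: "S 0 * pop_coeff x d = outflow_rate_last x * (1 - x) - \<mu>"
    using sums_of_ratio_chain(1)[OF chain last] by simp
  have "reduced x d = pop_coeff x d * (S 0 * inf_coeff x d + \<beta> n * \<mu> - (r + \<mu>) * outflow_rate_last x)"
    unfolding reduced_def pop[symmetric] by (simp add: algebra_simps)
  then show "reduced x d = 0"
    unfolding inf by simp
  have S0: "S 0 = susceptible_0 x d"
    using pop pop_coeff_pos[OF \<open>0 \<le> x\<close> \<open>0 \<le> d\<close>] by (simp add: susceptible_0_def field_simps)
  show "\<forall>i\<le>n. S i = equilibrium_S x d i"
  proof (intro allI impI)
    fix i assume "i \<le> n"
    then consider "i < n" | "i = n"
      by linarith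
    then show "S i = equilibrium_S x d i"
    proof cases
      case 1
      then show ?thesis
        using chain[rule_format, of i] S0 by (simp add: equilibrium_S_def)
    next
      case 2
      then show ?thesis
        using last chain[rule_format, of "n - 1"] S0 n_ge_1 outflow_rate_last_pos[OF \<open>0 \<le> x\<close>]
        by (simp add: equilibrium_S_def field_simps)
    qed
  qed
qed

lemma reduced_eq_0_imp_endemic_equilibrium:
  assumes "reduced x d = 0" "0 < x" "0 \<le> d"
  shows "endemic_equilibrium n d \<omega> r \<mu> p \<beta> (equilibrium_S x d) x"
proof -
  define S where "S = equilibrium_S x d"
  have pos: "pop_coeff x d > 0" "outflow_rate_last x > 0"
    using pop_coeff_pos outflow_rate_last_pos assms by auto
  have S0: "S 0 = susceptible_0 x d"
    using n_ge_1 by (simp add: S_def equilibrium_S_def)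
  have chain: "\<forall>i<n. S i = ratio i x d * S 0"
    unfolding S0 by (simp add: S_def equilibrium_S_def)
  have last: "S n * outflow_rate_last x = \<mu> + (1 - p (n - 1)) * d * S (n - 1)"
    using pos n_ge_1 chain[rule_format, of "n - 1"] by (simp add: S_def equilibrium_S_def)
  have pop: "S 0 * pop_coeff x d = outflow_rate_last x * (1 - x) - \<mu>"
    using pos by (simp add: S0 susceptible_0_def)
  have "pop_coeff x d * (S 0 * inf_coeff x d - ((r + \<mu>) * outflow_rate_last x - \<beta> n * \<mu>)) = reduced x d"
    unfolding reduced_def pop[symmetric] by (simp add: algebra_simps)
  then have inf: "S 0 * inf_coeff x d = (r + \<mu>) * outflow_rate_last x - \<beta> n * \<mu>"
    using assms(1) pos by simp
  have "outflow_rate_last x * ((\<Sum>i\<le>n. S i) + x) = outflow_rate_last x * 1"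
    using sums_of_ratio_chain(1)[OF chain last] unfolding pop by (simp add: algebra_simps)
  then have norm: "(\<Sum>i\<le>n. S i) + x = 1"
    using pos by simp
  have "outflow_rate_last x * (\<Sum>i\<le>n. \<beta> i * S i) = outflow_rate_last x * (r + \<mu>)"
    using sums_of_ratio_chain(2)[OF chain last] unfolding inf by (simp add: algebra_simps)
  then have infected: "(\<Sum>i\<le>n. \<beta> i * S i) = r + \<mu>"
    using pos by simp
  have middle: "\<forall>i\<in>{1..n - 1}. - (p i * \<omega>) * S i + (1 - p (i - 1)) * d * S (i - 1)
      - (1 - p i) * d * S i - \<beta> i * x * S i - \<mu> * S i = 0"
    using middle_equations_iff_ratio[of x d S] chain assms less_imp_le by blast
  have "\<mu> - p n * \<omega> * S n + (1 - p (n - 1)) * d * S (n - 1) - \<beta> n * x * S n - \<mu> * S n = 0"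
    using last last_equation_iff by blast
  with norm middle infected first_equation_redundant[OF norm middle this infected] \<open>0 < x\<close>
  show ?thesis
    unfolding endemic_equilibrium_def S_def[symmetric] by (simp add: distrib_left)
qed

lemma root_fun_eq:
  assumes "\<beta> 0 * x + \<mu> \<noteq> 0" "\<beta> n * x + \<mu> + p n * \<omega> \<noteq> 0"
  shows "root_fun r \<mu> (\<beta> 0) (\<beta> n) (p n * \<omega>) x
    = - endemic_poly x / ((\<beta> 0 * x + \<mu>) * (\<beta> n * x + \<mu> + p n * \<omega>))"
proof -
  define a b where "a = \<beta> 0 * x + \<mu>" and "b = \<beta> n * x + \<mu> + p n * \<omega>"
  have "root_fun r \<mu> (\<beta> 0) (\<beta> n) (p n * \<omega>) x * (a * b) = a * b + r * b - \<beta> n * a - p n * \<omega> * \<beta> 0"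
    using assms unfolding root_fun_def a_def[symmetric] b_def[symmetric] by (simp add: field_simps)
  also have "\<dots> = - endemic_poly x"
    by (simp add: a_def b_def endemic_poly_def outflow_rate_last_def algebra_simps)
  finally show ?thesis
    unfolding eq_divide_eq using assms by (simp add: a_def b_def)
qed

lemma root_fun_eq_0_iff:
  assumes "\<beta> 0 * x + \<mu> \<noteq> 0" "\<beta> n * x + \<mu> + p n * \<omega> \<noteq> 0"
  shows "root_fun r \<mu> (\<beta> 0) (\<beta> n) (p n * \<omega>) x = 0 \<longleftrightarrow> endemic_poly x = 0"
  using root_fun_eq[OF assms] assms by simp

lemma endemic_poly_dx_neq_0:
  assumes "endemic_poly y = 0" "endemic_poly v = 0" "y \<noteq> v"
  shows "endemic_poly_dx y \<noteq> 0"
proof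
  assume "endemic_poly_dx y = 0"
  moreover have "endemic_poly v = endemic_poly y + endemic_poly_dx y * (v - y) - \<beta> 0 * \<beta> n * (v - y)\<^sup>2"
    by (simp add: endemic_poly_def endemic_poly_dx_def outflow_rate_last_def algebra_simps power2_eq_square)
  ultimately show False
    using assms \<beta>_pos[of 0] \<beta>_pos[of n] by simp
qed

lemma eventually_unique_reduced_zero:
  assumes "0 < y" "endemic_poly y = 0" "endemic_poly_dx y \<noteq> 0" "0 < C"
  shows "\<forall>\<^sub>F d in at_right 0. \<exists>!x. \<bar>x - y\<bar> \<le> C * sqrt d \<and> reduced x d = 0"
proof (rule eventually_unique_zero_near_simple_zero)
  have "\<forall>\<^sub>F (x, d) in nhds y \<times>\<^sub>F at_right 0. 0 < x \<and> (0::real) < d"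
    using eventually_prodI[OF eventually_nhds_in_open[of "{0<..}" y] eventually_at_right_less[of "0::real"]]
      \<open>0 < y\<close> by (simp add: case_prod_beta')
  then show "\<forall>\<^sub>F (x, d) in nhds y \<times>\<^sub>F at_right 0. ((\<lambda>x. reduced x d) has_real_derivative reduced_dx x d) (at x)"
    by (rule eventually_mono) (auto intro: has_real_derivative_reduced)
  show "isCont (\<lambda>z. reduced_dx (fst z) (snd z)) (y, 0)"
    using \<open>0 < y\<close> by (simp add: isCont_reduced_dx)
  show "reduced_dx y 0 \<noteq> 0"
    using assms outflow_rate_last_pos[of y] by (simp add: reduced_dx_at_0)
  show "((\<lambda>d. reduced y d / sqrt d) \<longlongrightarrow> 0) (at_right 0)"
    using assms by (intro tendsto_div_sqrt_at_right_0 differentiable_reduced_at_0) (simp_all add: reduced_at_0)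
qed fact

lemma unique_endemic_equilibrium_in_interval:
  assumes "0 < d" "{y - h..y + h} \<subseteq> {0<..1}" and unique: "\<exists>!x. \<bar>x - y\<bar> \<le> h \<and> reduced x d = 0"
  shows "\<exists>S I. endemic_equilibrium n d \<omega> r \<mu> p \<beta> S I \<and> I \<in> {y - h..y + h} \<and>
    (\<forall>S' I'. endemic_equilibrium n d \<omega> r \<mu> p \<beta> S' I' \<and> I' \<in> {y - h..y + h} \<longrightarrow>
      I' = I \<and> (\<forall>i\<le>n. S' i = S i))"
proof -
  have interval: "x \<in> {y - h..y + h} \<longleftrightarrow> \<bar>x - y\<bar> \<le> h" for x
    by (auto simp: abs_le_iff)
  obtain x where x: "\<bar>x - y\<bar> \<le> h" "reduced x d = 0"
    using unique by blast
  then have "0 < x"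
    using assms(2) interval by auto
  show ?thesis
  proof (intro exI conjI allI impI)
    show "endemic_equilibrium n d \<omega> r \<mu> p \<beta> (equilibrium_S x d) x"
      using reduced_eq_0_imp_endemic_equilibrium x \<open>0 < x\<close> \<open>0 < d\<close> by simp
    show "x \<in> {y - h..y + h}"
      using interval x by blast
    fix S' I'
    assume eq': "endemic_equilibrium n d \<omega> r \<mu> p \<beta> S' I' \<and> I' \<in> {y - h..y + h}"
    then have "0 < I'"
      using assms(2) by auto
    then have "reduced I' d = 0" and S': "\<forall>i\<le>n. S' i = equilibrium_S I' d i"
      using endemic_equilibrium_imp_reduced_eq_0 eq' \<open>0 < d\<close> by auto
    then show "I' = x"
      using unique x eq' interval by blast
    fix i assume "i \<le> n"
    then show "S' i = equilibrium_S x d i"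
      using S' \<open>I' = x\<close> by simp
  qed
qed

end

theorem lemma2:
  fixes n :: nat and \<omega> r \<mu> C y1 y2 :: real and p \<beta> :: "nat \<Rightarrow> real"
  assumes n: "n \<ge> 1"
    and \<omega>: "\<omega> \<ge> 0" and r: "r > 0" and \<mu>: "\<mu> > 0"
    and p0: "p 0 = 0" and p: "\<forall>i\<in>{1..n}. 0 \<le> p i \<and> p i \<le> 1"
    and \<beta>pos: "\<beta> 0 > 0"
    and \<beta>mono: "\<forall>i j. i \<le> j \<and> j \<le> n \<longrightarrow> \<beta> i \<le> \<beta> j"
    and \<beta>lt: "\<beta> 0 < \<beta> n"
    and roots: "y1 \<le> y2"
      "{x. \<beta> 0 * x + \<mu> \<noteq> 0 \<and> \<beta> n * x + \<mu> + p n * \<omega> \<noteq> 0 \<and>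
           root_fun r \<mu> (\<beta> 0) (\<beta> n) (p n * \<omega>) x = 0} = {y1, y2}"
    and C: "C > 0"
    and Cprop: "\<exists>\<delta>0>0. \<forall>\<delta> S I. 0 \<le> \<delta> \<and> \<delta> < \<delta>0 \<and>
                  endemic_equilibrium n \<delta> \<omega> r \<mu> p \<beta> S I \<and> I \<in> {0..1} \<longrightarrow>
                  I \<in> {y1 - C * sqrt \<delta> .. y1 + C * sqrt \<delta>} \<union>
                       {y2 - C * sqrt \<delta> .. y2 + C * sqrt \<delta>}"
  shows "\<forall>y\<in>{y1, y2}. \<exists>\<delta>1>0. \<forall>\<delta>. 0 < \<delta> \<and> \<delta> < \<delta>1 \<and>
            {y - C * sqrt \<delta> .. y + C * sqrt \<delta>} \<subseteq> {0<..1} \<and>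
            \<bar>y1 - y2\<bar> \<ge> \<delta> powr (1/3) \<longrightarrow>
            (\<exists>S I. endemic_equilibrium n \<delta> \<omega> r \<mu> p \<beta> S I \<and>
                   I \<in> {y - C * sqrt \<delta> .. y + C * sqrt \<delta>} \<and>
                   (\<forall>S' I'. endemic_equilibrium n \<delta> \<omega> r \<mu> p \<beta> S' I' \<and>
                      I' \<in> {y - C * sqrt \<delta> .. y + C * sqrt \<delta>} \<longrightarrow>
                      I' = I \<and> (\<forall>i\<le>n. S' i = S i)))"
proof (intro ballI, goal_cases)
  case (1 y)
  interpret waning_immunity n \<omega> r \<mu> p \<beta>
    using n \<omega> \<mu> p0 p \<beta>pos \<beta>mono by unfold_locales
  have root: "endemic_poly u = 0" if "u \<in> {y1, y2}" for u
    using roots(2) that root_fun_eq_0_iff by blast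
  show ?case
  proof (cases "y1 \<noteq> y2 \<and> 0 < y")
    case True
    then obtain v where "v \<in> {y1, y2}" "v \<noteq> y"
      using 1 by auto
    then have "endemic_poly_dx y \<noteq> 0"
      using endemic_poly_dx_neq_0 root 1 by metis
    then obtain \<delta>1 where "0 < \<delta>1"
      and "\<forall>\<delta>>0. \<delta> < \<delta>1 \<longrightarrow> (\<exists>!x. \<bar>x - y\<bar> \<le> C * sqrt \<delta> \<and> reduced x \<delta> = 0)"
      using eventually_unique_reduced_zero[of y C] True root[OF 1] C
      unfolding eventually_at_right_field by auto
    then show ?thesis
      using unique_endemic_equilibrium_in_interval by blast
  next
    case False
    have "y \<in> {y - C * sqrt \<delta> .. y + C * sqrt \<delta>}" "0 < \<delta> powr (1/3)" if "0 < \<delta>" for \<delta>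
      using C that by simp_all
    then show ?thesis
      using False by (intro exI[of _ 1]) force
  qed
qed

end
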